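(* Let $\{A_n\}_{n\geqslant 1}$ be i.i.d. nonnegative random variables with Laplace–Stieltjes transform $\alpha(s)=\mathbb{E}[e^{-sA_1}]$, and let $\{B_n\}_{n\geqslant 1}$ be i.i.d. exponentially distributed with rate $\mu>0$, independent of $\{A_n\}$. Let $W_1\geqslant 0$ be a random variable (possibly a constant) independent of $\{A_n\},\{B_n\}$ with finite mean, and let $W_{n+1}=\max\{0,\,B_{n+1}-A_n-W_n\}$ for $n\geqslant 1$. Then for every $n\geqslant 2$ and $k\geqslant 1$, $$\operatorname{cov}[W_n,W_{n+k}]=\frac{\mathbb{E}[W_n]}{\mu}\left(\mathbb{P}[W_n=0]+\frac12\right)\left(-\frac{\alpha(\mu)}{2}\right)^{k}.$$ Furthermore, if the conditional distribution of $W_1$ given $W_1>0$ is exponential with rate $\mu$, then the same formula holds also for $n=1$. *)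

theory Defs
  imports "HOL-Probability.Probability"
begin

definition covariance :: "'a measure \<Rightarrow> ('a \<Rightarrow> real) \<Rightarrow> ('a \<Rightarrow> real) \<Rightarrow> real" where
  "covariance M X Y =
     (\<integral>x. (X x - (\<integral>y. X y \<partial>M)) * (Y x - (\<integral>y. Y y \<partial>M)) \<partial>M)"

definition driving_family ::
  "(nat \<Rightarrow> 'a \<Rightarrow> real) \<Rightarrow> (nat \<Rightarrow> 'a \<Rightarrow> real) \<Rightarrow> ('a \<Rightarrow> real) \<Rightarrow> nat + nat + unit \<Rightarrow> 'a \<Rightarrow> real" where
  "driving_family A B W1 i = (case i of Inl n \<Rightarrow> A n | Inr (Inl n) \<Rightarrow> B n | Inr (Inr _) \<Rightarrow> W1)"

end

theory Submission
  imports Defs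
begin

text \<open>
  Put \<open>C = A m + W m \<ge> 0\<close>. As \<open>B (m + 1) \<sim> Exp(\<mu>)\<close> is independent of the past,
  memorylessness makes the conditional law of \<open>W (m + 1) = max 0 (B (m + 1) - C)\<close> the mixture of
  an atom at \<open>0\<close> with weight \<open>1 - exp (-\<mu> C)\<close> and \<open>Exp(\<mu>)\<close> with weight \<open>exp (-\<mu> C)\<close>;
  the factor \<open>exp (-\<mu> A m)\<close> is independent of the past and has mean \<open>\<alpha>(\<mu>)\<close>. Hence for
  weights \<open>V = v (W n)\<close> with \<open>n \<le> m\<close>
    \<open>E[V W (m + 1)] = \<alpha>/\<mu> E[V exp (-\<mu> W m)]\<close>  and
    \<open>E[V exp (-\<mu> W (m + 1))] = E[V] - \<alpha>/2 E[V exp (-\<mu> W m)]\<close>.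
  Taking \<open>V = W n\<close> and \<open>V = 1\<close>, the defect \<open>d j = E[W n exp (-\<mu> W (n + j))] - E[W n] E[exp (-\<mu> W (n + j))]\<close>
  satisfies \<open>d (j + 1) = -\<alpha>/2 d j\<close>, and \<open>cov (W n) (W (n + k)) = \<alpha>/\<mu> d (k - 1)\<close>. Finally
  \<open>d 0\<close> is explicit because \<open>W n\<close> itself has such a mixture law: for \<open>n \<ge> 2\<close> by the above,
  for \<open>n = 1\<close> by the extra hypothesis.
\<close>

lemma (in prob_space) nn_integral_indep_var:
  assumes indep: "indep_var N Y N' Z" and f[measurable]: "f \<in> borel_measurable (N \<Otimes>\<^sub>M N')"
  shows "(\<integral>\<^sup>+x. f (Y x, Z x) \<partial>M) = (\<integral>\<^sup>+x. \<integral>\<^sup>+\<omega>. f (Y x, Z \<omega>) \<partial>M \<partial>M)"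
proof -
  have [measurable]: "Y \<in> M \<rightarrow>\<^sub>M N" "Z \<in> M \<rightarrow>\<^sub>M N'"
    and joint: "distr M N Y \<Otimes>\<^sub>M distr M N' Z = distr M (N \<Otimes>\<^sub>M N') (\<lambda>x. (Y x, Z x))"
    using indep unfolding indep_var_distribution_eq by auto
  interpret Z: prob_space "distr M N' Z" by (rule prob_space_distr) simp
  have "(\<integral>\<^sup>+x. f (Y x, Z x) \<partial>M) = (\<integral>\<^sup>+p. f p \<partial>(distr M N Y \<Otimes>\<^sub>M distr M N' Z))"
    by (simp add: joint nn_integral_distr)
  also have "\<dots> = (\<integral>\<^sup>+y. \<integral>\<^sup>+z. f (y, z) \<partial>distr M N' Z \<partial>distr M N Y)"
    by (rule Z.nn_integral_fst[symmetric]) simp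
  also have "\<dots> = (\<integral>\<^sup>+x. \<integral>\<^sup>+z. f (Y x, z) \<partial>distr M N' Z \<partial>M)"
    by (simp add: nn_integral_distr)
  also have "\<dots> = (\<integral>\<^sup>+x. \<integral>\<^sup>+\<omega>. f (Y x, Z \<omega>) \<partial>M \<partial>M)"
    by (intro nn_integral_cong) (simp add: nn_integral_distr measurable_space[of Y M N])
  finally show ?thesis .
qed

lemma integrable_mult_bounded:
  fixes f g :: "'a \<Rightarrow> real"
  assumes "integrable M f" "g \<in> borel_measurable M" "AE x in M. \<bar>g x\<bar> \<le> C"
  shows "integrable M (\<lambda>x. f x * g x)"
proof (rule Bochner_Integration.integrable_bound)
  show "integrable M (\<lambda>x. C * f x)"
    using assms(1) by simp
  show "AE x in M. norm (f x * g x) \<le> norm (C * f x)"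
    using assms(3)
  proof eventually_elim
    case (elim x)
    then have "\<bar>f x\<bar> * \<bar>g x\<bar> \<le> \<bar>f x\<bar> * C" "0 \<le> C"
      by (auto intro: mult_left_mono)
    then show ?case
      by (simp add: abs_mult mult.commute)
  qed
qed (use assms(1,2) in measurable)

lemma (in prob_space) covariance_eq:
  fixes X Y :: "'a \<Rightarrow> real"
  assumes "integrable M X" "integrable M Y" "integrable M (\<lambda>x. X x * Y x)"
  shows "covariance M X Y = (\<integral>x. X x * Y x \<partial>M) - (\<integral>x. X x \<partial>M) * (\<integral>x. Y x \<partial>M)"
proof -
  define a b where "a = (\<integral>x. X x \<partial>M)" and "b = (\<integral>x. Y x \<partial>M)"
  have "covariance M X Y = (\<integral>x. X x * Y x - b * X x - a * Y x + a * b \<partial>M)"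
    unfolding covariance_def a_def[symmetric] b_def[symmetric] by (simp add: algebra_simps)
  also have "\<dots> = (\<integral>x. X x * Y x \<partial>M) - b * a - a * b + a * b"
    using assms by (simp add: a_def b_def prob_space)
  finally show ?thesis by (simp add: a_def b_def)
qed

section \<open>Integrals against the exponential density\<close>

definition exponential_expectation :: "real \<Rightarrow> (real \<Rightarrow> ennreal) \<Rightarrow> ennreal" where
  "exponential_expectation \<mu> h = (\<integral>\<^sup>+b. ennreal (exponential_density \<mu> b) * h b \<partial>lborel)"

lemma exponential_expectation_max_shift:
  assumes "0 < \<mu>" "0 \<le> c" and h[measurable]: "h \<in> borel_measurable borel"
  shows "exponential_expectation \<mu> (\<lambda>b. h (max 0 (b - c)))
       = ennreal (1 - exp (-\<mu> * c)) * h 0 + ennreal (exp (-\<mu> * c)) * exponential_expectation \<mu> h"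
proof -
  let ?e = "\<lambda>b. ennreal (exponential_density \<mu> b)"
  have split: "?e b * h (max 0 (b - c)) = h 0 * (?e b * indicator {..<c} b) + ?e b * h (b - c) * indicator {c..} b" for b
    by (auto simp: indicator_def mult.commute)
  have "(\<integral>\<^sup>+b. ?e b * indicator {..<c} b \<partial>lborel) = (\<integral>\<^sup>+b. ?e b * indicator {..c} b \<partial>lborel)"
    using AE_lborel_singleton[of c] by (intro nn_integral_cong_AE) (auto elim!: eventually_mono simp: indicator_def)
  also have "\<dots> = ennreal (1 - exp (-\<mu> * c))"
    using assms by (simp add: nn_integral_erlang_density erlang_CDF_0)
  finally have below: "(\<integral>\<^sup>+b. ?e b * indicator {..<c} b \<partial>lborel) = ennreal (1 - exp (-\<mu> * c))" .
  \<comment> \<open>memorylessness: on \<open>[0, \<infinity>)\<close> the density at \<open>c + s\<close> is \<open>exp (-\<mu> c)\<close> times the density at \<open>s\<close>\<close>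
  have shift: "?e (c + s) * h s * indicator {c..} (c + s) = ennreal (exp (-\<mu> * c)) * (?e s * h s)" for s
    using \<open>0 \<le> c\<close> by (cases "s < 0") (auto simp: exponential_density_def indicator_def exp_add[symmetric]
        algebra_simps ennreal_mult'[symmetric])
  have "(\<integral>\<^sup>+b. ?e b * h (b - c) * indicator {c..} b \<partial>lborel)
      = (\<integral>\<^sup>+s. ?e (c + s) * h s * indicator {c..} (c + s) \<partial>lborel)"
    by (subst lborel_distr_plus[of c, symmetric]) (simp add: nn_integral_distr)
  also have "\<dots> = ennreal (exp (-\<mu> * c)) * exponential_expectation \<mu> h"
    unfolding shift exponential_expectation_def by (rule nn_integral_cmult) simp
  finally have above: "(\<integral>\<^sup>+b. ?e b * h (b - c) * indicator {c..} b \<partial>lborel)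
      = ennreal (exp (-\<mu> * c)) * exponential_expectation \<mu> h" .
  have "exponential_expectation \<mu> (\<lambda>b. h (max 0 (b - c)))
      = (\<integral>\<^sup>+b. h 0 * (?e b * indicator {..<c} b) \<partial>lborel) + (\<integral>\<^sup>+b. ?e b * h (b - c) * indicator {c..} b \<partial>lborel)"
    unfolding exponential_expectation_def split by (rule nn_integral_add) auto
  also have "\<dots> = h 0 * ennreal (1 - exp (-\<mu> * c)) + ennreal (exp (-\<mu> * c)) * exponential_expectation \<mu> h"
    unfolding above below[symmetric] by (subst nn_integral_cmult) auto
  finally show ?thesis by (simp add: mult.commute)
qed

lemma exponential_expectation_eq_0:
  assumes "\<And>b. 0 < b \<Longrightarrow> h b = 0"
  shows "exponential_expectation \<mu> h = 0"
proof -
  have "AE b in lborel. ennreal (exponential_density \<mu> b) * h b = 0"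
    using AE_lborel_singleton[of 0] by eventually_elim (auto simp: exponential_density_def assms)
  from nn_integral_cong_AE[OF this] show ?thesis
    unfolding exponential_expectation_def by simp
qed

lemma exponential_expectation_id:
  assumes "0 < \<mu>"
  shows "exponential_expectation \<mu> ennreal = ennreal (1 / \<mu>)"
proof -
  have "ennreal (exponential_density \<mu> b) * ennreal b = ennreal (exponential_density \<mu> b * b ^ 1)" for b
    by (cases "b < 0") (auto simp: exponential_density_def ennreal_mult''[symmetric] ennreal_neg)
  then show ?thesis
    using nn_integral_erlang_ith_moment[of \<mu> 0 1] assms
    by (simp add: exponential_expectation_def divide_ennreal)
qed

lemma exponential_density_mult_exp:
  "0 < \<mu> \<Longrightarrow> exponential_density \<mu> b * exp (-\<mu> * b) = exponential_density (2 * \<mu>) b / 2"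
  by (simp add: exponential_density_def exp_add[symmetric] algebra_simps)

lemma exponential_expectation_exp:
  assumes "0 < \<mu>"
  shows "exponential_expectation \<mu> (\<lambda>b. ennreal (exp (-\<mu> * b))) = ennreal (1 / 2)"
proof -
  interpret prob_space "density lborel (exponential_density (2 * \<mu>))"
    using assms by (intro prob_space_exponential_density) simp
  have "exponential_expectation \<mu> (\<lambda>b. ennreal (exp (-\<mu> * b)))
      = (\<integral>\<^sup>+b. ennreal (1 / 2) * ennreal (exponential_density (2 * \<mu>) b) \<partial>lborel)"
    unfolding exponential_expectation_def
  proof (intro nn_integral_cong)
    fix b :: real
    have "exponential_density \<mu> b * exp (-\<mu> * b) = 1 / 2 * exponential_density (2 * \<mu>) b"
      using exponential_density_mult_exp[OF assms] by simp
    then show "ennreal (exponential_density \<mu> b) * ennreal (exp (-\<mu> * b))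
             = ennreal (1 / 2) * ennreal (exponential_density (2 * \<mu>) b)"
      by (metis ennreal_mult' ennreal_mult'' exp_ge_zero zero_le_divide_1_iff zero_le_numeral)
  qed
  also have "\<dots> = ennreal (1 / 2) * emeasure (density lborel (exponential_density (2 * \<mu>))) UNIV"
    by (simp add: nn_integral_cmult emeasure_density)
  finally show ?thesis by (simp add: emeasure_space_1[simplified])
qed

lemma exponential_expectation_mult_exp:
  assumes "0 < \<mu>"
  shows "exponential_expectation \<mu> (\<lambda>b. ennreal (b * exp (-\<mu> * b))) = ennreal (1 / (4 * \<mu>))"
proof -
  have "exponential_expectation \<mu> (\<lambda>b. ennreal (b * exp (-\<mu> * b)))
      = (\<integral>\<^sup>+b. ennreal (1 / 2) * ennreal (exponential_density (2 * \<mu>) b * b ^ 1) \<partial>lborel)"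
    unfolding exponential_expectation_def
  proof (intro nn_integral_cong)
    fix b :: real
    show "ennreal (exponential_density \<mu> b) * ennreal (b * exp (-\<mu> * b))
        = ennreal (1 / 2) * ennreal (exponential_density (2 * \<mu>) b * b ^ 1)"
    proof (cases "b < 0")
      case False
      then have "exponential_density \<mu> b * (b * exp (-\<mu> * b)) = 1 / 2 * (exponential_density (2 * \<mu>) b * b ^ 1)"
        using exponential_density_mult_exp[OF assms, of b] by simp
      then show ?thesis
        using False by (metis ennreal_mult' ennreal_mult'' exp_ge_zero mult_nonneg_nonneg
            not_less zero_le_divide_1_iff zero_le_numeral)
    qed (simp add: exponential_density_def ennreal_neg)
  qed
  also have "\<dots> = ennreal (1 / 2) * ennreal (1 / (2 * \<mu>))"
    using nn_integral_erlang_ith_moment[of "2 * \<mu>" 0 1] assms by (subst nn_integral_cmult) auto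
  also have "\<dots> = ennreal (1 / (4 * \<mu>))"
    by (subst ennreal_mult'[symmetric]) simp_all
  finally show ?thesis .
qed

section \<open>Mixtures of an atom at zero and an exponential law\<close>

text \<open>The law of \<open>X\<close> is \<open>(1 - q) \<delta>\<^sub>0 + q Exp(\<mu>)\<close>.\<close>
definition exp_atom_mixture :: "'a measure \<Rightarrow> real \<Rightarrow> real \<Rightarrow> ('a \<Rightarrow> real) \<Rightarrow> bool" where
  "exp_atom_mixture M \<mu> q X \<longleftrightarrow> 0 \<le> q \<and> q \<le> 1 \<and>
     (\<forall>h \<in> borel_measurable borel.
        (\<integral>\<^sup>+x. h (X x) \<partial>M) = ennreal (1 - q) * h 0 + ennreal q * exponential_expectation \<mu> h)"

context prob_space
begin

lemma exp_atom_mixture_nonneg: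
  assumes [measurable]: "X \<in> borel_measurable M" and mix: "exp_atom_mixture M \<mu> q X"
  shows "AE x in M. 0 \<le> X x"
proof -
  have "(\<integral>\<^sup>+x. indicator {..<0} (X x) \<partial>M) = 0"
    using mix by (simp add: exp_atom_mixture_def exponential_expectation_eq_0)
  then have "AE x in M. indicator {..<0} (X x) = (0::ennreal)"
    by (subst (asm) nn_integral_0_iff_AE) auto
  then show ?thesis
    by eventually_elim (auto simp: indicator_def not_less)
qed

lemma exp_atom_mixture_moments:
  assumes [measurable]: "X \<in> borel_measurable M" and "0 < \<mu>" and mix: "exp_atom_mixture M \<mu> q X"
  shows "(\<integral>x. X x \<partial>M) = q / \<mu>"
    and "(\<integral>x. X x * exp (-\<mu> * X x) \<partial>M) = q / (4 * \<mu>)"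
    and "(\<integral>x. exp (-\<mu> * X x) \<partial>M) = 1 - q / 2"
    and "prob {x \<in> space M. X x = 0} = 1 - q"
proof -
  have q: "0 \<le> q" "q \<le> 1"
    and law: "\<And>h. h \<in> borel_measurable borel \<Longrightarrow>
      (\<integral>\<^sup>+x. h (X x) \<partial>M) = ennreal (1 - q) * h 0 + ennreal q * exponential_expectation \<mu> h"
    using mix by (auto simp: exp_atom_mixture_def)
  have X_nonneg: "AE x in M. 0 \<le> X x"
    by (rule exp_atom_mixture_nonneg[OF _ mix]) simp
  have integral_eq: "(\<integral>x. g (X x) \<partial>M) = r"
    if [measurable]: "g \<in> borel_measurable borel" and "\<And>y. 0 \<le> y \<Longrightarrow> 0 \<le> g y" and "0 \<le> r"
      and "ennreal (1 - q) * ennreal (g 0) + ennreal q * exponential_expectation \<mu> (\<lambda>y. ennreal (g y)) = ennreal r"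
    for g :: "real \<Rightarrow> real" and r
  proof (rule has_bochner_integral_integral_eq, rule has_bochner_integral_nn_integral)
    show "AE x in M. 0 \<le> g (X x)"
      using X_nonneg by eventually_elim (simp add: that)
    show "(\<integral>\<^sup>+x. ennreal (g (X x)) \<partial>M) = ennreal r"
      using law[of "\<lambda>y. ennreal (g y)"] that by simp
  qed (simp_all add: that)
  show "(\<integral>x. X x \<partial>M) = q / \<mu>"
    using q \<open>0 < \<mu>\<close> by (intro integral_eq[of "\<lambda>y. y"])
      (simp_all add: exponential_expectation_id ennreal_mult'[symmetric])
  show "(\<integral>x. X x * exp (-\<mu> * X x) \<partial>M) = q / (4 * \<mu>)"
    using q \<open>0 < \<mu>\<close> exponential_expectation_mult_exp[OF \<open>0 < \<mu>\<close>]
    by (intro integral_eq[of "\<lambda>y. y * exp (-\<mu> * y)"]) (simp_all add: ennreal_mult'[symmetric])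
  have "ennreal (1 - q) * ennreal 1 + ennreal q * ennreal (1 / 2) = ennreal (1 - q / 2)"
    using q by (subst ennreal_mult'[symmetric], simp)+ (subst ennreal_plus[symmetric]; simp)
  then show "(\<integral>x. exp (-\<mu> * X x) \<partial>M) = 1 - q / 2"
    using q exponential_expectation_exp[OF \<open>0 < \<mu>\<close>]
    by (intro integral_eq[of "\<lambda>y. exp (-\<mu> * y)"]) simp_all
  have "emeasure M {x \<in> space M. X x = 0} = (\<integral>\<^sup>+x. indicator {x \<in> space M. X x = 0} x \<partial>M)"
    by (rule nn_integral_indicator[symmetric]) measurable
  also have "\<dots> = (\<integral>\<^sup>+x. indicator {0} (X x) \<partial>M)"
    by (intro nn_integral_cong) (simp add: indicator_def)
  also have "\<dots> = ennreal (1 - q)"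
    using law[of "indicator {0}"] by (simp add: exponential_expectation_eq_0)
  finally show "prob {x \<in> space M. X x = 0} = 1 - q"
    using q by (simp add: emeasure_eq_measure)
qed

lemma exp_atom_mixture_if_tail:
  assumes [measurable]: "X \<in> borel_measurable M" and "0 < \<mu>" "0 < q"
    and X_nonneg: "AE x in M. 0 \<le> X x"
    and tail: "\<And>t. 0 \<le> t \<Longrightarrow> \<P>(x in M. t < X x) = q * exp (-\<mu> * t)"
  shows "exp_atom_mixture M \<mu> q X"
proof -
  have "q \<le> 1"
    using tail[of 0] prob_le_1[of "{x \<in> space M. 0 < X x}"] by simp
  \<comment> \<open>the excess over \<open>c\<close> of an \<open>Exp(\<mu>)\<close> variable exceeds \<open>t \<ge> 0\<close> with probability \<open>q exp (-\<mu> t)\<close>\<close>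
  define c where "c = - ln q / \<mu>"
  have exp_c: "exp (-\<mu> * c) = q"
    using \<open>0 < \<mu>\<close> \<open>0 < q\<close> by (simp add: c_def)
  have "0 \<le> c"
    using \<open>0 < \<mu>\<close> \<open>0 < q\<close> \<open>q \<le> 1\<close> by (simp add: c_def divide_nonpos_pos)
  define N where "N = density lborel (exponential_density \<mu>)"
  interpret N: prob_space N
    unfolding N_def using \<open>0 < \<mu>\<close> by (rule prob_space_exponential_density)
  have cdf_distr: "cdf (distr L borel f) x = measure L {w \<in> space L. f w \<le> x}"
    if "f \<in> borel_measurable L" for L f x
    using that by (simp add: cdf_def2 measure_distr vimage_def Int_def conj_commute)
  have max_measurable[measurable]: "(\<lambda>b. max 0 (b - c)) \<in> borel_measurable N"
    unfolding N_def by simp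
  have law: "distr M borel X = distr N borel (\<lambda>b. max 0 (b - c))"
  proof (rule cdf_unique)
    show "cdf (distr M borel X) = cdf (distr N borel (\<lambda>b. max 0 (b - c)))"
    proof
      fix x :: real
      show "cdf (distr M borel X) x = cdf (distr N borel (\<lambda>b. max 0 (b - c))) x"
      proof (cases "x < 0")
        case True
        have "measure M {\<omega> \<in> space M. X \<omega> \<le> x} = 0"
          using X_nonneg True by (simp add: measure_def emeasure_eq_0_AE[OF eventually_mono[OF X_nonneg]])
        moreover have "{b \<in> space N. max 0 (b - c) \<le> x} = {}"
          using True by auto
        ultimately show ?thesis
          unfolding cdf_distr[OF \<open>X \<in> borel_measurable M\<close>] cdf_distr[OF max_measurable]
          by (simp only: measure_empty)
      next
        case False
        have "\<P>(\<omega> in M. X \<omega> \<le> x) = 1 - \<P>(\<omega> in M. x < X \<omega>)"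
          by (subst prob_neg[symmetric]) (auto simp: not_less)
        also have "\<dots> = 1 - exp (-\<mu> * (x + c))"
          using False by (simp add: tail exp_add[symmetric] exp_c[symmetric] algebra_simps)
        also have "\<dots> = measure N {..x + c}"
          using False \<open>0 \<le> c\<close> \<open>0 < \<mu>\<close>
          by (simp add: N_def measure_def emeasure_erlang_density erlang_CDF_0)
        also have "{..x + c} = {b \<in> space N. max 0 (b - c) \<le> x}"
          using False by (auto simp: N_def)
        finally show ?thesis
          by (simp add: cdf_distr)
      qed
    qed
  qed (simp_all add: N.real_distribution_distr)
  show ?thesis
    unfolding exp_atom_mixture_def
  proof (intro conjI ballI)
    fix h :: "real \<Rightarrow> ennreal" assume h[measurable]: "h \<in> borel_measurable borel"
    have "(\<integral>\<^sup>+x. h (X x) \<partial>M) = (\<integral>\<^sup>+y. h y \<partial>distr N borel (\<lambda>b. max 0 (b - c)))"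
      by (simp add: nn_integral_distr law[symmetric])
    also have "\<dots> = (\<integral>\<^sup>+b. h (max 0 (b - c)) \<partial>N)"
      by (simp add: nn_integral_distr)
    also have "\<dots> = exponential_expectation \<mu> (\<lambda>b. h (max 0 (b - c)))"
      by (simp add: N_def exponential_expectation_def nn_integral_density)
    finally show "(\<integral>\<^sup>+x. h (X x) \<partial>M) = ennreal (1 - q) * h 0 + ennreal q * exponential_expectation \<mu> h"
      unfolding exponential_expectation_max_shift[OF \<open>0 < \<mu>\<close> \<open>0 \<le> c\<close> h] exp_c .
  qed (use \<open>0 < q\<close> \<open>q \<le> 1\<close> in auto)
qed

lemma exp_atom_mixture_if_cond_tail:
  assumes [measurable]: "X \<in> borel_measurable M" and "0 < \<mu>"
    and X_nonneg: "AE x in M. 0 \<le> X x"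
    and cond_tail: "\<And>t. 0 \<le> t \<Longrightarrow> \<P>(x in M. t < X x \<bar> 0 < X x) = exp (-\<mu> * t)"
  shows "exp_atom_mixture M \<mu> \<P>(x in M. 0 < X x) X"
proof (rule exp_atom_mixture_if_tail)
  have "\<P>(x in M. 0 < X x) \<noteq> 0"
    using cond_tail[of 0] by (auto simp: cond_prob_def)
  then show "0 < \<P>(x in M. 0 < X x)"
    by (simp add: order_less_le)
  fix t :: real assume "0 \<le> t"
  then have "{x \<in> space M. t < X x \<and> 0 < X x} = {x \<in> space M. t < X x}"
    by auto
  then show "\<P>(x in M. t < X x) = \<P>(x in M. 0 < X x) * exp (-\<mu> * t)"
    using cond_tail[OF \<open>0 \<le> t\<close>] \<open>\<P>(x in M. 0 < X x) \<noteq> 0\<close> by (simp add: cond_prob_def field_simps)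
qed (use assms in auto)

end

section \<open>The recursion\<close>

fun W_fun :: "nat \<Rightarrow> (nat + nat + unit \<Rightarrow> real) \<Rightarrow> real" where
  "W_fun 0 f = 0"
| "W_fun (Suc 0) f = f (Inr (Inr ()))"
| "W_fun (Suc (Suc n)) f = max 0 (f (Inr (Inl (Suc (Suc n)))) - f (Inl (Suc n)) - W_fun (Suc n) f)"

definition past_coords :: "nat \<Rightarrow> (nat + nat + unit) set" where
  "past_coords n = {Inr (Inr ())} \<union> {Inl j | j. 1 \<le> j \<and> j < n} \<union> {Inr (Inl j) | j. 2 \<le> j \<and> j \<le> n}"

lemma past_coords_mono: "n \<le> m \<Longrightarrow> past_coords n \<subseteq> past_coords m"
  unfolding past_coords_def by auto

lemma W_fun_cong: "(\<And>i. i \<in> past_coords n \<Longrightarrow> f i = g i) \<Longrightarrow> W_fun n f = W_fun n g"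
proof (induction n f rule: W_fun.induct)
  case (3 n f)
  then have "W_fun (Suc n) f = W_fun (Suc n) g"
    using past_coords_mono[of "Suc n" "Suc (Suc n)"] by auto
  moreover have "f (Inr (Inl (Suc (Suc n)))) = g (Inr (Inl (Suc (Suc n))))" "f (Inl (Suc n)) = g (Inl (Suc n))"
    using "3.prems" by (auto simp: past_coords_def)
  ultimately show ?case by simp
qed (auto simp: past_coords_def)

lemma W_fun_measurable: "past_coords n \<subseteq> J \<Longrightarrow> W_fun n \<in> borel_measurable (PiM J (\<lambda>_. borel))"
proof (induction n rule: less_induct)
  case (less n)
  consider "n = 0" | "n = Suc 0" | k where "n = Suc (Suc k)"
    by (metis not0_implies_Suc)
  then show ?case
  proof cases
    case 3
    then have "W_fun (Suc k) \<in> borel_measurable (PiM J (\<lambda>_. borel))"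
      using less past_coords_mono[of "Suc k" "Suc (Suc k)"] by auto
    moreover have "Inr (Inl (Suc (Suc k))) \<in> J" "Inl (Suc k) \<in> J"
      using less.prems 3 by (auto simp: past_coords_def)
    ultimately show ?thesis
      using 3 by (simp add: measurable_component_singleton)
  qed (use less.prems in \<open>auto simp: past_coords_def intro!: measurable_component_singleton\<close>)
qed

definition driving_index :: "(nat + nat + unit) set" where
  "driving_index = {Inl n | n. n \<ge> 1} \<union> {Inr (Inl n) | n. n \<ge> 1} \<union> {Inr (Inr ())}"

lemma past_coords_subset_driving_index: "past_coords n \<subseteq> driving_index"
  unfolding past_coords_def driving_index_def by auto

locale reflected_recursion = prob_space M for M :: "'a measure" +
  fixes A B W :: "nat \<Rightarrow> 'a \<Rightarrow> real" and \<mu> :: real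
  assumes mu_pos: "\<mu> > 0"
    and indep: "indep_vars (\<lambda>_. borel) (driving_family A B (W 1)) driving_index"
    and A_measurable: "\<And>n. n \<ge> 1 \<Longrightarrow> A n \<in> borel_measurable M"
    and A_nonneg: "\<And>n. n \<ge> 1 \<Longrightarrow> AE x in M. A n x \<ge> 0"
    and A_ident: "\<And>n. n \<ge> 1 \<Longrightarrow> distr M borel (A n) = distr M borel (A 1)"
    and B_exp: "\<And>n. n \<ge> 1 \<Longrightarrow> distributed M lborel (B n) (exponential_density \<mu>)"
    and W1_measurable: "W 1 \<in> borel_measurable M"
    and W1_nonneg: "AE x in M. W 1 x \<ge> 0"
    and W1_integrable: "integrable M (W 1)"
    and W_Suc: "\<And>n x. n \<ge> 1 \<Longrightarrow> W (Suc n) x = max 0 (B (Suc n) x - A n x - W n x)"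
begin

definition alpha :: real where
  "alpha = (\<integral>x. exp (-\<mu> * A 1 x) \<partial>M)"

abbreviation D :: "nat + nat + unit \<Rightarrow> 'a \<Rightarrow> real" where
  "D \<equiv> driving_family A B (W 1)"

lemma B_measurable: "n \<ge> 1 \<Longrightarrow> B n \<in> borel_measurable M"
  using B_exp by (simp add: distributed_def)

lemma W_eq_W_fun: "n \<ge> 1 \<Longrightarrow> W n x = W_fun n (\<lambda>i. D i x)"
proof (induction n rule: nat_induct_at_least)
  case (Suc n)
  then obtain k where "n = Suc k" by (cases n) auto
  with Suc show ?case by (simp add: W_Suc driving_family_def)
qed (simp add: driving_family_def)

lemma W_eq_W_fun_restrict: "n \<ge> 1 \<Longrightarrow> past_coords n \<subseteq> J \<Longrightarrow> W n x = W_fun n (restrict (\<lambda>i. D i x) J)"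
  unfolding W_eq_W_fun by (rule W_fun_cong) auto

lemma W_measurable: "n \<ge> 1 \<Longrightarrow> W n \<in> borel_measurable M"
proof -
  assume "n \<ge> 1"
  have "(\<lambda>x. restrict (\<lambda>i. D i x) (past_coords n)) \<in> M \<rightarrow>\<^sub>M PiM (past_coords n) (\<lambda>_. borel)"
    using indep past_coords_subset_driving_index by (intro measurable_restrict) (auto simp: indep_vars_def)
  from measurable_comp[OF this W_fun_measurable[OF order_refl]] show ?thesis
    unfolding W_eq_W_fun_restrict[OF \<open>n \<ge> 1\<close> order_refl] by (simp add: comp_def)
qed

lemma W_nonneg: "n \<ge> 1 \<Longrightarrow> AE x in M. W n x \<ge> 0"
proof (cases "n = 1")
  case False
  moreover assume "n \<ge> 1"
  ultimately obtain k where "n = Suc k" "k \<ge> 1"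
    by (cases n) auto
  then show ?thesis by (simp add: W_Suc[OF \<open>k \<ge> 1\<close>])
qed (use W1_nonneg in simp)

lemma W_integrable: "n \<ge> 1 \<Longrightarrow> integrable M (W n)"
proof (induction n rule: nat_induct_at_least)
  case (Suc n)
  show ?case
  proof (rule Bochner_Integration.integrable_bound)
    show "integrable M (B (Suc n))"
      using erlang_ith_moment_integrable[OF mu_pos B_exp, of "Suc n" 1] by simp
    show "AE x in M. norm (W (Suc n) x) \<le> norm (B (Suc n) x)"
      using A_nonneg[OF Suc.hyps] W_nonneg[OF Suc.hyps] by eventually_elim (auto simp: W_Suc[OF Suc.hyps])
  qed (simp add: W_measurable)
qed (rule W1_integrable)

lemma integral_exp_A: "m \<ge> 1 \<Longrightarrow> (\<integral>x. exp (-\<mu> * A m x) \<partial>M) = alpha"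
proof -
  assume "m \<ge> 1"
  then have "(\<integral>x. exp (-\<mu> * A m x) \<partial>M) = (\<integral>a. exp (-\<mu> * a) \<partial>distr M borel (A m))"
    using A_measurable by (intro integral_distr[symmetric]) auto
  also have "\<dots> = (\<integral>x. exp (-\<mu> * A 1 x) \<partial>M)"
    using \<open>m \<ge> 1\<close> A_measurable by (subst A_ident) (auto intro: integral_distr)
  finally show ?thesis
    unfolding alpha_def .
qed

lemma integral_exp_A_W:
  assumes "1 \<le> n" "n \<le> m" and v[measurable]: "v \<in> borel_measurable borel"
    and v_int: "integrable M (\<lambda>x. v (W n x))"
  shows "(\<integral>x. v (W n x) * exp (-\<mu> * (A m x + W m x)) \<partial>M) = alpha * (\<integral>x. v (W n x) * exp (-\<mu> * W m x) \<partial>M)"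
proof -
  have "1 \<le> m" using assms by simp
  note [measurable] = W_measurable[OF \<open>1 \<le> n\<close>] W_measurable[OF \<open>1 \<le> m\<close>] A_measurable[OF \<open>1 \<le> m\<close>]
  define J where "J = past_coords m"
  have coords: "J \<inter> {Inl m} = {}" "J \<subseteq> driving_index" "{Inl m} \<subseteq> driving_index"
    using \<open>1 \<le> m\<close> past_coords_subset_driving_index by (auto simp: J_def past_coords_def driving_index_def)
  have [measurable]: "W_fun n \<in> borel_measurable (PiM J (\<lambda>_. borel))" "W_fun m \<in> borel_measurable (PiM J (\<lambda>_. borel))"
    using past_coords_mono[OF \<open>n \<le> m\<close>] by (auto simp: J_def intro!: W_fun_measurable)
  have "indep_var borel ((\<lambda>f. v (W_fun n f) * exp (-\<mu> * W_fun m f)) \<circ> (\<lambda>x. restrict (\<lambda>i. D i x) J))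
                  borel ((\<lambda>f. exp (-\<mu> * f (Inl m))) \<circ> (\<lambda>x. restrict (\<lambda>i. D i x) {Inl m}))"
    by (rule indep_var_compose[OF indep_var_restrict[OF indep coords]])
      (simp_all add: measurable_component_singleton)
  moreover have "(\<lambda>f. v (W_fun n f) * exp (-\<mu> * W_fun m f)) \<circ> (\<lambda>x. restrict (\<lambda>i. D i x) J)
      = (\<lambda>x. v (W n x) * exp (-\<mu> * W m x))"
    using W_eq_W_fun_restrict[OF \<open>1 \<le> n\<close>, of J] W_eq_W_fun_restrict[OF \<open>1 \<le> m\<close>, of J]
      past_coords_mono[OF \<open>n \<le> m\<close>] by (simp add: fun_eq_iff J_def)
  moreover have "(\<lambda>f. exp (-\<mu> * f (Inl m))) \<circ> (\<lambda>x. restrict (\<lambda>i. D i x) {Inl m}) = (\<lambda>x. exp (-\<mu> * A m x))"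
    by (simp add: fun_eq_iff driving_family_def)
  ultimately have indep_A: "indep_var borel (\<lambda>x. v (W n x) * exp (-\<mu> * W m x)) borel (\<lambda>x. exp (-\<mu> * A m x))"
    by simp
  have "integrable M (\<lambda>x. v (W n x) * exp (-\<mu> * W m x))"
    using W_nonneg[OF \<open>1 \<le> m\<close>] mu_pos
    by (intro integrable_mult_bounded[OF v_int, where C=1]) (auto elim!: eventually_mono)
  moreover have "integrable M (\<lambda>x. exp (-\<mu> * A m x))"
    using A_nonneg[OF \<open>1 \<le> m\<close>] mu_pos
    by (intro integrable_const_bound[where B=1]) (auto elim!: eventually_mono)
  moreover have "(\<integral>x. v (W n x) * exp (-\<mu> * (A m x + W m x)) \<partial>M)
      = (\<integral>x. v (W n x) * exp (-\<mu> * W m x) * exp (-\<mu> * A m x) \<partial>M)"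
    by (simp add: exp_add[symmetric] algebra_simps)
  ultimately show ?thesis
    using indep_var_lebesgue_integral[OF indep_A] integral_exp_A[OF \<open>1 \<le> m\<close>] by simp
qed

lemma nn_integral_W_Suc:
  assumes "1 \<le> n" "n \<le> m"
    and u[measurable]: "u \<in> borel_measurable borel" and h[measurable]: "h \<in> borel_measurable borel"
  shows "(\<integral>\<^sup>+x. u (W n x) * h (W (Suc m) x) \<partial>M) =
    (\<integral>\<^sup>+x. u (W n x) * (ennreal (1 - exp (-\<mu> * (A m x + W m x))) * h 0
      + ennreal (exp (-\<mu> * (A m x + W m x))) * exponential_expectation \<mu> h) \<partial>M)"
proof -
  have "1 \<le> m" using assms by simp
  note [measurable] = W_measurable[OF \<open>1 \<le> n\<close>] W_measurable[OF \<open>1 \<le> m\<close>] A_measurable[OF \<open>1 \<le> m\<close>]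
    B_measurable[of "Suc m"]
  define J where "J = insert (Inl m) (past_coords m)"
  define K where "K = {Inr (Inl (Suc m)) :: nat + nat + unit}"
  have coords: "J \<inter> K = {}" "J \<subseteq> driving_index" "K \<subseteq> driving_index"
    using \<open>1 \<le> m\<close> past_coords_subset_driving_index
    by (auto simp: J_def K_def past_coords_def driving_index_def)
  have W_J: "W n x = W_fun n (restrict (\<lambda>i. D i x) J)" "W m x = W_fun m (restrict (\<lambda>i. D i x) J)" for x
    using W_eq_W_fun_restrict[OF \<open>1 \<le> n\<close>, of J] W_eq_W_fun_restrict[OF \<open>1 \<le> m\<close>, of J]
      past_coords_mono[OF \<open>n \<le> m\<close>] by (auto simp: J_def)
  have [measurable]: "W_fun n \<in> borel_measurable (PiM J (\<lambda>_. borel))" "W_fun m \<in> borel_measurable (PiM J (\<lambda>_. borel))"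
    using past_coords_mono[OF \<open>n \<le> m\<close>] by (auto simp: J_def intro!: W_fun_measurable)
  have [measurable]: "(\<lambda>y. y (Inl m)) \<in> borel_measurable (PiM J (\<lambda>_. borel))"
    "(\<lambda>z. z (Inr (Inl (Suc m)))) \<in> borel_measurable (PiM K (\<lambda>_. borel))"
    by (auto simp: J_def K_def intro!: measurable_component_singleton)
  have coord_values: "restrict (\<lambda>i. D i x) J (Inl m) = A m x"
    "restrict (\<lambda>i. D i x) K (Inr (Inl (Suc m))) = B (Suc m) x" for x
    by (simp_all add: J_def K_def driving_family_def)
  define f :: "(nat + nat + unit \<Rightarrow> real) \<times> (nat + nat + unit \<Rightarrow> real) \<Rightarrow> ennreal"
    where "f = (\<lambda>(y, z). u (W_fun n y) * h (max 0 (z (Inr (Inl (Suc m))) - y (Inl m) - W_fun m y)))"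
  have f_measurable: "f \<in> borel_measurable (PiM J (\<lambda>_. borel) \<Otimes>\<^sub>M PiM K (\<lambda>_. borel))"
    unfolding f_def by measurable
  have h_shift: "(\<lambda>\<omega>. h (max 0 (B (Suc m) \<omega> - c))) \<in> borel_measurable M" for c
    by measurable
  have "(\<integral>\<^sup>+x. u (W n x) * h (W (Suc m) x) \<partial>M)
      = (\<integral>\<^sup>+x. f (restrict (\<lambda>i. D i x) J, restrict (\<lambda>i. D i x) K) \<partial>M)"
    by (simp only: f_def case_prod_conv W_J[symmetric] coord_values W_Suc[OF \<open>1 \<le> m\<close>])
  also have "\<dots> = (\<integral>\<^sup>+x. \<integral>\<^sup>+\<omega>. f (restrict (\<lambda>i. D i x) J, restrict (\<lambda>i. D i \<omega>) K) \<partial>M \<partial>M)"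
    by (rule nn_integral_indep_var[OF indep_var_restrict[OF indep coords] f_measurable])
  also have "\<dots> = (\<integral>\<^sup>+x. u (W n x) * (\<integral>\<^sup>+\<omega>. h (max 0 (B (Suc m) \<omega> - (A m x + W m x))) \<partial>M) \<partial>M)"
    by (intro nn_integral_cong)
      (simp only: f_def case_prod_conv W_J[symmetric] coord_values diff_diff_eq nn_integral_cmult[OF h_shift])
  also have "\<dots> = (\<integral>\<^sup>+x. u (W n x) * (ennreal (1 - exp (-\<mu> * (A m x + W m x))) * h 0
      + ennreal (exp (-\<mu> * (A m x + W m x))) * exponential_expectation \<mu> h) \<partial>M)"
  proof (rule nn_integral_cong_AE)
    show "AE x in M. u (W n x) * (\<integral>\<^sup>+\<omega>. h (max 0 (B (Suc m) \<omega> - (A m x + W m x))) \<partial>M)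
      = u (W n x) * (ennreal (1 - exp (-\<mu> * (A m x + W m x))) * h 0
        + ennreal (exp (-\<mu> * (A m x + W m x))) * exponential_expectation \<mu> h)"
      using A_nonneg[OF \<open>1 \<le> m\<close>] W_nonneg[OF \<open>1 \<le> m\<close>]
    proof eventually_elim
      case (elim x)
      have "(\<integral>\<^sup>+\<omega>. h (max 0 (B (Suc m) \<omega> - (A m x + W m x))) \<partial>M)
          = exponential_expectation \<mu> (\<lambda>b. h (max 0 (b - (A m x + W m x))))"
        unfolding exponential_expectation_def by (rule distributed_nn_integral[OF B_exp, symmetric]) simp_all
      then show ?case
        using elim by (simp add: exponential_expectation_max_shift[OF mu_pos])
    qed
  qed
  finally show ?thesis .
qed

lemma exp_atom_mixture_W_Suc:
  assumes "1 \<le> m"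
  shows "exp_atom_mixture M \<mu> (\<integral>x. exp (-\<mu> * (A m x + W m x)) \<partial>M) (W (Suc m))"
proof -
  note [measurable] = W_measurable[OF \<open>1 \<le> m\<close>] A_measurable[OF \<open>1 \<le> m\<close>]
  define E where "E x = exp (-\<mu> * (A m x + W m x))" for x
  have [measurable]: "E \<in> borel_measurable M"
    unfolding E_def by measurable
  have E_bounds: "AE x in M. 0 \<le> E x \<and> E x \<le> 1"
    using A_nonneg[OF \<open>1 \<le> m\<close>] W_nonneg[OF \<open>1 \<le> m\<close>]
    by eventually_elim (use mu_pos in \<open>simp add: E_def\<close>)
  have "AE x in M. norm (E x) \<le> 1"
    using E_bounds by eventually_elim simp
  then have E_int: "integrable M E"
    by (rule integrable_const_bound) simp
  have nn_E: "(\<integral>\<^sup>+x. ennreal (E x) \<partial>M) = ennreal (\<integral>x. E x \<partial>M)"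
    using E_bounds by (intro nn_integral_eq_integral[OF E_int]) (auto elim!: eventually_mono)
  have nn_1_E: "(\<integral>\<^sup>+x. ennreal (1 - E x) \<partial>M) = ennreal (1 - (\<integral>x. E x \<partial>M))"
    using E_bounds E_int by (subst nn_integral_eq_integral) (auto elim!: eventually_mono simp: prob_space)
  have "0 \<le> (\<integral>x. E x \<partial>M)" "(\<integral>x. E x \<partial>M) \<le> 1"
    using E_bounds integral_mono_AE[OF E_int, of "\<lambda>_. 1"]
    by (auto intro: integral_nonneg_AE elim!: eventually_mono simp: prob_space)
  moreover have "(\<integral>\<^sup>+x. h (W (Suc m) x) \<partial>M)
      = ennreal (1 - (\<integral>x. E x \<partial>M)) * h 0 + ennreal (\<integral>x. E x \<partial>M) * exponential_expectation \<mu> h"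
    if h[measurable]: "h \<in> borel_measurable borel" for h
  proof -
    have "(\<integral>\<^sup>+x. h (W (Suc m) x) \<partial>M)
        = (\<integral>\<^sup>+x. ennreal (1 - E x) * h 0 + ennreal (E x) * exponential_expectation \<mu> h \<partial>M)"
      using nn_integral_W_Suc[OF \<open>1 \<le> m\<close> order_refl _ h, of "\<lambda>_. 1"] by (simp add: E_def)
    also have "\<dots> = ennreal (1 - (\<integral>x. E x \<partial>M)) * h 0 + ennreal (\<integral>x. E x \<partial>M) * exponential_expectation \<mu> h"
      by (subst nn_integral_add) (auto simp: nn_integral_multc nn_E nn_1_E)
    finally show ?thesis .
  qed
  ultimately show ?thesis
    by (simp add: exp_atom_mixture_def E_def)
qed

lemma has_bochner_integral_W_Suc:
  assumes "1 \<le> n" "n \<le> m" and v[measurable]: "v \<in> borel_measurable borel"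
    and v_nonneg: "AE x in M. 0 \<le> v (W n x)" and v_int: "integrable M (\<lambda>x. v (W n x))"
    and g[measurable]: "g \<in> borel_measurable borel" and g_nonneg: "\<And>y. 0 \<le> y \<Longrightarrow> 0 \<le> g y"
    and g_exp: "exponential_expectation \<mu> (\<lambda>y. ennreal (g y)) = ennreal k" and "0 \<le> k"
  shows "has_bochner_integral M (\<lambda>x. v (W n x) * g (W (Suc m) x))
    (g 0 * (\<integral>x. v (W n x) \<partial>M) + (k - g 0) * alpha * (\<integral>x. v (W n x) * exp (-\<mu> * W m x) \<partial>M))"
proof -
  have "1 \<le> m" using assms by simp
  note [measurable] = W_measurable[OF \<open>1 \<le> n\<close>] W_measurable[OF \<open>1 \<le> m\<close>] A_measurable[OF \<open>1 \<le> m\<close>]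
    W_measurable[of "Suc m"]
  have W_Suc_nonneg: "0 \<le> W (Suc m) x" for x
    by (simp add: W_Suc[OF \<open>1 \<le> m\<close>])
  define E where "E x = exp (-\<mu> * (A m x + W m x))" for x
  have [measurable]: "E \<in> borel_measurable M"
    unfolding E_def by measurable
  have E_bounds: "AE x in M. 0 \<le> E x \<and> E x \<le> 1"
    using A_nonneg[OF \<open>1 \<le> m\<close>] W_nonneg[OF \<open>1 \<le> m\<close>]
    by eventually_elim (use mu_pos in \<open>simp add: E_def\<close>)
  define F where "F x = g 0 * v (W n x) + (k - g 0) * (v (W n x) * E x)" for x
  have F_eq: "F x = v (W n x) * ((1 - E x) * g 0 + E x * k)" for x
    by (simp add: F_def algebra_simps)
  have vE_int: "integrable M (\<lambda>x. v (W n x) * E x)"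
    using E_bounds by (intro integrable_mult_bounded[OF v_int, where C=1]) (auto elim: eventually_mono)
  then have F_int: "integrable M F"
    unfolding F_def using v_int by simp
  have "(\<integral>\<^sup>+x. ennreal (v (W n x) * g (W (Suc m) x)) \<partial>M)
      = (\<integral>\<^sup>+x. ennreal (v (W n x)) * ennreal (g (W (Suc m) x)) \<partial>M)"
    using v_nonneg by (intro nn_integral_cong_AE) (auto elim!: eventually_mono simp: ennreal_mult g_nonneg[OF W_Suc_nonneg])
  also have "\<dots> = (\<integral>\<^sup>+x. ennreal (v (W n x)) * (ennreal (1 - E x) * ennreal (g 0) + ennreal (E x) * ennreal k) \<partial>M)"
    unfolding nn_integral_W_Suc[OF \<open>1 \<le> n\<close> \<open>n \<le> m\<close>, of "\<lambda>y. ennreal (v y)" "\<lambda>y. ennreal (g y)", simplified]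
    by (simp add: g_exp E_def)
  also have "\<dots> = (\<integral>\<^sup>+x. ennreal (F x) \<partial>M)"
    using v_nonneg E_bounds
  proof (intro nn_integral_cong_AE, eventually_elim)
    case (elim x)
    then show ?case
      using g_nonneg[of 0] \<open>0 \<le> k\<close> by (simp add: F_eq ennreal_mult ennreal_plus)
  qed
  also have F_nonneg: "AE x in M. 0 \<le> F x"
    using v_nonneg E_bounds by eventually_elim (use g_nonneg[of 0] \<open>0 \<le> k\<close> in \<open>simp add: F_eq\<close>)
  then have "(\<integral>\<^sup>+x. ennreal (F x) \<partial>M) = ennreal (\<integral>x. F x \<partial>M)"
    by (rule nn_integral_eq_integral[OF F_int])
  finally have "has_bochner_integral M (\<lambda>x. v (W n x) * g (W (Suc m) x)) (\<integral>x. F x \<partial>M)"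
    using v_nonneg F_nonneg
    by (intro has_bochner_integral_nn_integral integral_nonneg_AE) (auto elim: eventually_mono simp: g_nonneg[OF W_Suc_nonneg])
  moreover have "(\<integral>x. F x \<partial>M)
      = g 0 * (\<integral>x. v (W n x) \<partial>M) + (k - g 0) * alpha * (\<integral>x. v (W n x) * exp (-\<mu> * W m x) \<partial>M)"
    using vE_int v_int integral_exp_A_W[OF \<open>1 \<le> n\<close> \<open>n \<le> m\<close> v v_int]
    unfolding F_def by (simp add: E_def)
  ultimately show ?thesis
    by simp
qed

lemma covariance_W:
  assumes "1 \<le> n" "1 \<le> k" and mix: "exp_atom_mixture M \<mu> q (W n)"
  shows "covariance M (W n) (W (n + k)) =
    (\<integral>x. W n x \<partial>M) / \<mu> * (prob {x \<in> space M. W n x = 0} + 1/2) * (- alpha / 2) ^ k"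
proof -
  note [measurable] = W_measurable[OF \<open>1 \<le> n\<close>]
  note moments = exp_atom_mixture_moments[OF W_measurable[OF \<open>1 \<le> n\<close>] mu_pos mix]
  have W_int: "integrable M (W n)" and W_nonneg: "AE x in M. 0 \<le> W n x"
    using W_integrable W_nonneg \<open>1 \<le> n\<close> by auto
  define w where "w = (\<integral>x. W n x \<partial>M)"
  define a where "a j = (\<integral>x. W n x * exp (-\<mu> * W (n + j) x) \<partial>M)" for j
  define b where "b j = (\<integral>x. exp (-\<mu> * W (n + j) x) \<partial>M)" for j
  note exp_moment = exponential_expectation_exp[OF mu_pos] and mean = exponential_expectation_id[OF mu_pos]
  have a_Suc: "a (Suc j) = w - alpha / 2 * a j" for j
  proof -
    have "has_bochner_integral M (\<lambda>x. W n x * exp (-\<mu> * W (Suc (n + j)) x))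
        (exp (-\<mu> * 0) * w + (1 / 2 - exp (-\<mu> * 0)) * alpha * a j)"
      unfolding w_def a_def using \<open>1 \<le> n\<close> W_nonneg W_int exp_moment
      by (intro has_bochner_integral_W_Suc[where v="\<lambda>y. y" and g="\<lambda>y. exp (-\<mu> * y)"]) simp_all
    then show ?thesis
      by (simp add: a_def has_bochner_integral_integral_eq)
  qed
  have b_Suc: "b (Suc j) = 1 - alpha / 2 * b j" for j
  proof -
    have "has_bochner_integral M (\<lambda>x. 1 * exp (-\<mu> * W (Suc (n + j)) x))
        (exp (-\<mu> * 0) * (\<integral>x. 1 \<partial>M) + (1 / 2 - exp (-\<mu> * 0)) * alpha * (\<integral>x. 1 * exp (-\<mu> * W (n + j) x) \<partial>M))"
      using \<open>1 \<le> n\<close> exp_moment by (intro has_bochner_integral_W_Suc[where n=n and v="\<lambda>_. 1" and g="\<lambda>y. exp (-\<mu> * y)"]) simp_all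
    then show ?thesis
      by (simp add: b_def has_bochner_integral_integral_eq prob_space)
  qed
  have diff: "a j - w * b j = (- alpha / 2) ^ j * (a 0 - w * b 0)" for j
  proof (induction j)
    case (Suc j)
    have "a (Suc j) - w * b (Suc j) = (- alpha / 2) * (a j - w * b j)"
      by (simp add: a_Suc b_Suc field_simps)
    then show ?case using Suc by simp
  qed simp
  obtain j where j: "k = Suc j"
    using \<open>1 \<le> k\<close> by (cases k) auto
  have "has_bochner_integral M (\<lambda>x. W n x * W (Suc (n + j)) x)
      (0 * (\<integral>x. W n x \<partial>M) + (1 / \<mu> - 0) * alpha * a j)"
    unfolding a_def using \<open>1 \<le> n\<close> W_nonneg W_int mean mu_pos
    by (intro has_bochner_integral_W_Suc[where v="\<lambda>y. y" and g="\<lambda>y. y"]) simp_all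
  then have prod: "has_bochner_integral M (\<lambda>x. W n x * W (n + k) x) (alpha / \<mu> * a j)"
    by (simp add: j)
  have "has_bochner_integral M (\<lambda>x. 1 * W (Suc (n + j)) x)
      (0 * (\<integral>x. 1 \<partial>M) + (1 / \<mu> - 0) * alpha * (\<integral>x. 1 * exp (-\<mu> * W (n + j) x) \<partial>M))"
    using \<open>1 \<le> n\<close> mean mu_pos by (intro has_bochner_integral_W_Suc[where n=n and v="\<lambda>_. 1" and g="\<lambda>y. y"]) simp_all
  then have mean_k: "has_bochner_integral M (W (n + k)) (alpha / \<mu> * b j)"
    by (simp add: b_def j)
  have "covariance M (W n) (W (n + k)) = alpha / \<mu> * (a j - w * b j)"
    using covariance_eq[OF W_int integrable.intros[OF mean_k] integrable.intros[OF prod]]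
      prod mean_k by (simp add: has_bochner_integral_integral_eq w_def algebra_simps)
  also have "\<dots> = alpha / \<mu> * (- alpha / 2) ^ j * (q / (4 * \<mu>) - q / \<mu> * (1 - q / 2))"
    unfolding diff[of j] using moments by (simp add: a_def b_def w_def)
  also have "\<dots> = q / \<mu> / \<mu> * ((1 - q) + 1 / 2) * (- alpha / 2) ^ k"
    using mu_pos by (simp add: j field_simps)
  finally show ?thesis
    using moments by simp
qed

end

theorem theorem3p4:
  fixes M :: "'a measure" and A B W :: "nat \<Rightarrow> 'a \<Rightarrow> real" and \<mu> :: real
  assumes "prob_space M"
    and "\<mu> > 0"
    and indep: "prob_space.indep_vars M (\<lambda>_. borel) (driving_family A B (W 1))
                  ({Inl n | n. n \<ge> 1} \<union> {Inr (Inl n) | n. n \<ge> 1} \<union> {Inr (Inr ())})"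
    and A_rv: "\<And>n. n \<ge> 1 \<Longrightarrow> A n \<in> borel_measurable M"
    and A_nonneg: "\<And>n. n \<ge> 1 \<Longrightarrow> AE x in M. A n x \<ge> 0"
    and A_ident: "\<And>n. n \<ge> 1 \<Longrightarrow> distr M borel (A n) = distr M borel (A 1)"
    and B_exp: "\<And>n. n \<ge> 1 \<Longrightarrow> distributed M lborel (B n) (exponential_density \<mu>)"
    and W1_rv: "W 1 \<in> borel_measurable M"
    and W1_nonneg: "AE x in M. W 1 x \<ge> 0"
    and W1_int: "integrable M (W 1)"
    and W_rec: "\<And>n x. n \<ge> 1 \<Longrightarrow> W (Suc n) x = max 0 (B (Suc n) x - A n x - W n x)"
  defines "\<alpha> \<equiv> (\<lambda>s. \<integral>x. exp (- s * A 1 x) \<partial>M)"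
  shows "(\<forall>n\<ge>2. \<forall>k\<ge>1. covariance M (W n) (W (n + k)) =
            (\<integral>x. W n x \<partial>M) / \<mu> * (measure M {x \<in> space M. W n x = 0} + 1/2) * (- \<alpha> \<mu> / 2) ^ k)
       \<and> ((\<forall>t\<ge>0. cond_prob M (\<lambda>x. W 1 x > t) (\<lambda>x. W 1 x > 0) = exp (- \<mu> * t)) \<longrightarrow>
          (\<forall>k\<ge>1. covariance M (W 1) (W (1 + k)) =
            (\<integral>x. W 1 x \<partial>M) / \<mu> * (measure M {x \<in> space M. W 1 x = 0} + 1/2) * (- \<alpha> \<mu> / 2) ^ k))"
proof -
  interpret prob_space M by fact
  interpret reflected_recursion M A B W \<mu>
  proof
    show "indep_vars (\<lambda>_. borel) (driving_family A B (W 1)) driving_index"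
      using indep unfolding driving_index_def .
  qed fact+
  have alpha: "\<alpha> \<mu> = alpha"
    by (simp add: \<alpha>_def alpha_def)
  show ?thesis
  proof (intro conjI allI impI)
    fix n k :: nat
    assume "n \<ge> 2" "k \<ge> 1"
    then obtain m where "n = Suc m" "1 \<le> m"
      by (cases n) auto
    then show "covariance M (W n) (W (n + k)) =
        (\<integral>x. W n x \<partial>M) / \<mu> * (measure M {x \<in> space M. W n x = 0} + 1/2) * (- \<alpha> \<mu> / 2) ^ k"
      using covariance_W[OF _ \<open>k \<ge> 1\<close> exp_atom_mixture_W_Suc[OF \<open>1 \<le> m\<close>]] alpha by simp
  next
    fix k :: nat
    assume cond_tail: "\<forall>t\<ge>0. cond_prob M (\<lambda>x. W 1 x > t) (\<lambda>x. W 1 x > 0) = exp (- \<mu> * t)"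
      and "k \<ge> 1"
    have "exp_atom_mixture M \<mu> \<P>(x in M. 0 < W 1 x) (W 1)"
      using cond_tail by (intro exp_atom_mixture_if_cond_tail W1_measurable mu_pos W1_nonneg) auto
    from covariance_W[OF le_refl \<open>k \<ge> 1\<close> this] show "covariance M (W 1) (W (1 + k)) =
        (\<integral>x. W 1 x \<partial>M) / \<mu> * (measure M {x \<in> space M. W 1 x = 0} + 1/2) * (- \<alpha> \<mu> / 2) ^ k"
      using alpha by simp
  qed
qed

end
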